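(* Let $1\le k<n$, let $w=(y_1,\dots,y_{k-r},\overline{z_r},\dots,\overline{z_1},v_1,\dots,v_{n-k-1},\widehat{v_{n-k}})\in W^{OG(k,2n)}$ and $\lambda=\mathrm{Inv}(w)$. Then for $1\le i\le k$, \[\lambda^{(1)}_i=\begin{cases} n-k+|\{l: z_i<v_l\}| & \text{if } i\le r,\\ |\{l: y_{k+1-i}>v_l\}| & \text{if } i>r,\end{cases}\qquad \lambda^{(2)}_i=\begin{cases} |\{q: z_i<z_q\}|+|\{t: z_i<y_t\}| & \text{if } i\le r,\\ 0 & \text{if } i>r,\end{cases}\] and if $\lambda^{(1)}_i=n-k$ for some $i$, then $\lambda$ is assigned $\uparrow$ if $w$ is of type I and $\downarrow$ if $w$ is of type II.
   Context: Root system $D_n$: positive roots $e_a\pm e_b$ ($a<b$). $W^{OG(k,2n)}$ is the set of signed permutations $w=(y_1,\dots,y_{k-r},\overline{z_r},\dots,\overline{z_1},v_1,\dots,v_{n-k-1},\widehat{v_{n-k}})$ of $1,\dots,n$ with an even number of barred (negative) entries, $0\le r\le k$, $y_1<\dots<y_{k-r}$, $z_r>\dots>z_1$, $v_1<\dots<v_{n-k}$, $\widehat{v_{n-k}}\in\{v_{n-k},\overline{v_{n-k}}\}$ according to the parity of $r$; $w$ is of type I if $\widehat{v_{n-k}}=v_{n-k}$ and type II otherwise. The entry in position $k+1-i$ is $\overline{z_i}$ if $i\le r$ and $y_{k+1-i}$ if $i>r$. $w$ acts by $e_a\mapsto\pm e_{|w(a)|}$ (minus if barred) and $\mathrm{Inv}(w)$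 is the set of positive roots sent to negative roots. For a set $S$ of positive roots, $\lambda^{(1)}_i$ is the number of roots of $S$ among $e_{k+1-i}\pm e_b$, $b>k$, and $\lambda^{(2)}_i$ the number of roots of $S$ of the form $e_a+e_{k+1-i}$ with $a<k+1-i$. If $\lambda^{(1)}_i=n-k$ for some $i$, $S$ is assigned $\uparrow$ if it contains $e_{k+1-i}-e_n$ and $\downarrow$ if it contains $e_{k+1-i}+e_n$ (for such $i$). *)

theory Defs
  imports Main "HOL-Library.Function_Algebras"
begin

text \<open>Vectors in Z^n are functions nat => int (coordinates 1..n); e a is the unit vector.\<close>

definition e :: "nat \<Rightarrow> nat \<Rightarrow> int" where
  "e a = (\<lambda>j. if j = a then 1 else 0)"

definition pos_roots :: "nat \<Rightarrow> (nat \<Rightarrow> int) set" where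
  "pos_roots n = {e a - e b | a b. 1 \<le> a \<and> a < b \<and> b \<le> n}
               \<union> {e a + e b | a b. 1 \<le> a \<and> a < b \<and> b \<le> n}"

text \<open>A signed permutation is w :: nat => int on positions 1..n; a barred entry is a
  negative value. It acts by e_a |-> sgn(w a) e_{|w a|}, extended linearly.\<close>
definition signed_perm :: "nat \<Rightarrow> (nat \<Rightarrow> int) \<Rightarrow> bool" where
  "signed_perm n w \<longleftrightarrow> (\<forall>a\<in>{1..n}. w a \<noteq> 0) \<and>
      bij_betw (\<lambda>a. nat \<bar>w a\<bar>) {1..n} {1..n}"

definition act :: "nat \<Rightarrow> (nat \<Rightarrow> int) \<Rightarrow> (nat \<Rightarrow> int) \<Rightarrow> (nat \<Rightarrow> int)" where
  "act n w u = (\<lambda>j. \<Sum>a\<in>{1..n}. if nat \<bar>w a\<bar> = j then sgn (w a) * u a else 0)"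

definition Inv :: "nat \<Rightarrow> (nat \<Rightarrow> int) \<Rightarrow> (nat \<Rightarrow> int) set" where
  "Inv n w = {\<alpha> \<in> pos_roots n. - act n w \<alpha> \<in> pos_roots n}"

text \<open>Membership in W^{OG(k,2n)} with a given r: positions 1..k-r hold y_1<...<y_{k-r}
  (unbarred), positions k-r+1..k hold bar z_r,...,bar z_1 with z_r > ... > z_1,
  positions k+1..n-1 hold v_1<...<v_{n-k-1} (unbarred), position n holds
  v_{n-k} or bar v_{n-k} with v_{n-k-1} < v_{n-k}; the number of barred entries is even.\<close>
definition WOG_shape :: "nat \<Rightarrow> nat \<Rightarrow> nat \<Rightarrow> (nat \<Rightarrow> int) \<Rightarrow> bool" where
  "WOG_shape n k r w \<longleftrightarrow> signed_perm n w \<and> r \<le> k \<and> k < n \<and>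
     (\<forall>a\<in>{1..k-r}. w a > 0) \<and>
     (\<forall>a\<in>{1..k-r}. \<forall>b\<in>{1..k-r}. a < b \<longrightarrow> w a < w b) \<and>
     (\<forall>a\<in>{k-r+1..k}. w a < 0) \<and>
     (\<forall>a\<in>{k-r+1..k}. \<forall>b\<in>{k-r+1..k}. a < b \<longrightarrow> - w a > - w b) \<and>
     (\<forall>a\<in>{k+1..<n}. w a > 0) \<and>
     (\<forall>a\<in>{k+1..n}. \<forall>b\<in>{k+1..n}. a < b \<longrightarrow> \<bar>w a\<bar> < \<bar>w b\<bar>) \<and>
     even (r + (if w n < 0 then 1 else 0))"

definition in_WOG :: "nat \<Rightarrow> nat \<Rightarrow> (nat \<Rightarrow> int) \<Rightarrow> bool" where
  "in_WOG n k w \<longleftrightarrow> (\<exists>r. WOG_shape n k r w)"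

definition typeI :: "nat \<Rightarrow> (nat \<Rightarrow> int) \<Rightarrow> bool" where
  "typeI n w \<longleftrightarrow> w n > 0"

definition typeII :: "nat \<Rightarrow> (nat \<Rightarrow> int) \<Rightarrow> bool" where
  "typeII n w \<longleftrightarrow> w n < 0"

definition yent :: "(nat \<Rightarrow> int) \<Rightarrow> nat \<Rightarrow> nat" where
  "yent w t = nat (w t)"
definition zent :: "nat \<Rightarrow> (nat \<Rightarrow> int) \<Rightarrow> nat \<Rightarrow> nat" where
  "zent k w i = nat (- w (k + 1 - i))"
definition vent :: "nat \<Rightarrow> (nat \<Rightarrow> int) \<Rightarrow> nat \<Rightarrow> nat" where
  "vent k w l = nat \<bar>w (k + l)\<bar>"

definition lam1 :: "nat \<Rightarrow> nat \<Rightarrow> (nat \<Rightarrow> int) set \<Rightarrow> nat \<Rightarrow> nat" where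
  "lam1 n k S i = card (S \<inter> ({e (k + 1 - i) - e b | b. k < b \<and> b \<le> n}
                              \<union> {e (k + 1 - i) + e b | b. k < b \<and> b \<le> n}))"

definition lam2 :: "nat \<Rightarrow> nat \<Rightarrow> (nat \<Rightarrow> int) set \<Rightarrow> nat \<Rightarrow> nat" where
  "lam2 n k S i = card (S \<inter> {e a + e (k + 1 - i) | a. 1 \<le> a \<and> a < k + 1 - i})"

definition arrow_up :: "nat \<Rightarrow> nat \<Rightarrow> (nat \<Rightarrow> int) set \<Rightarrow> nat \<Rightarrow> bool" where
  "arrow_up n k S i \<longleftrightarrow> e (k + 1 - i) - e n \<in> S"
definition arrow_down :: "nat \<Rightarrow> nat \<Rightarrow> (nat \<Rightarrow> int) set \<Rightarrow> nat \<Rightarrow> bool" where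
  "arrow_down n k S i \<longleftrightarrow> e (k + 1 - i) + e n \<in> S"

end

theory Submission
  imports Defs
begin

text \<open>A positive root \<open>e a \<plusminus> e b\<close> with \<open>a < b\<close> is an inversion of \<open>w\<close> exactly when its
  image has coefficient \<open>-1\<close> at its leading coordinate, the smaller of \<open>\<bar>w a\<bar>\<close> and \<open>\<bar>w b\<bar>\<close>.
  Row \<open>i\<close> is position \<open>p = k + 1 - i\<close>; against each column \<open>b > k\<close> the two roots \<open>e p \<plusminus> e b\<close>
  give two inversions if \<open>w p < 0\<close> and \<open>\<bar>w p\<bar> < \<bar>w b\<bar>\<close>, none if \<open>w p > 0\<close> and
  \<open>\<bar>w p\<bar> < \<bar>w b\<bar>\<close>, and exactly one otherwise, which yields \<open>lam1\<close>. For \<open>lam2\<close>, a barred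
  entry \<open>w p\<close> makes \<open>e a + e p\<close> an inversion for every earlier barred position and for the
  \<open>y\<^sub>t > z\<^sub>i\<close>, while before an unbarred entry there are only unbarred ones and no such
  inversions. Finally \<open>lam1 = n - k\<close> forces \<open>\<bar>w n\<bar> < \<bar>w p\<bar>\<close>, so the leading coordinate of
  the image of \<open>e p \<plusminus> e n\<close> carries the sign of \<open>w n\<close>, that is, the type of \<open>w\<close>.\<close>

lemma e_apply: "e a j = (if j = a then 1 else 0)"
  by (simp add: e_def)

lemma e_inj: "e a = e b \<Longrightarrow> a = b"
  by (drule fun_cong[of _ _ a]) (simp add: e_def split: if_splits)

lemma pos_roots_iff_leading_coeff:
  fixes f :: "nat \<Rightarrow> int"
  assumes AB: "A \<noteq> B" "A \<in> {1..n}" "B \<in> {1..n}"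
    and unit: "f A \<in> {1,-1}" "f B \<in> {1,-1}"
    and supp: "\<And>j. j \<noteq> A \<Longrightarrow> j \<noteq> B \<Longrightarrow> f j = 0"
  shows "f \<in> pos_roots n \<longleftrightarrow> f (min A B) = 1"
proof
  assume "f \<in> pos_roots n"
  then obtain a b where ab: "1 \<le> a" "a < b" "b \<le> n" and f: "f = e a - e b \<or> f = e a + e b"
    unfolding pos_roots_def by blast
  have fa: "f a = 1" and fb: "f b \<noteq> 0" using f ab by (auto simp: e_apply)
  then have "a \<in> {A,B}" "b \<in> {A,B}" using supp by fastforce+
  then show "f (min A B) = 1" using ab fa AB by (auto simp: min_def)
next
  assume lead: "f (min A B) = 1"
  define a b where "a = min A B" and "b = max A B"
  have ab: "1 \<le> a" "a < b" "b \<le> n" and fb: "f b \<in> {1,-1}"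
    using AB unit by (auto simp: a_def b_def min_def max_def)
  have "f = e a + e b \<or> f = e a - e b"
    using lead fb supp AB(1) by (auto simp: a_def b_def e_apply fun_eq_iff min_def max_def)
  then show "f \<in> pos_roots n" using ab unfolding pos_roots_def by blast
qed

lemma act_e:
  assumes "c \<in> {1..n}"
  shows "act n w (e c) = (\<lambda>j. if j = nat \<bar>w c\<bar> then sgn (w c) else 0)"
proof
  fix j
  have "act n w (e c) j
      = (\<Sum>a\<in>{1..n}. if a = c then (if nat \<bar>w c\<bar> = j then sgn (w c) else 0) else 0)"
    unfolding act_def by (rule sum.cong) (auto simp: e_apply)
  then show "act n w (e c) j = (if j = nat \<bar>w c\<bar> then sgn (w c) else 0)"
    using assms by (simp add: sum.delta')
qed

lemma act_diff: "act n w (u - v) = act n w u - act n w v"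
  unfolding act_def
  by (auto simp: fun_eq_iff sum_subtractf[symmetric] algebra_simps intro!: sum.cong)

lemma act_add: "act n w (u + v) = act n w u + act n w v"
  unfolding act_def
  by (auto simp: fun_eq_iff sum.distrib[symmetric] algebra_simps intro!: sum.cong)

lemma signed_perm_nonzero: "signed_perm n w \<Longrightarrow> a \<in> {1..n} \<Longrightarrow> w a \<noteq> 0"
  unfolding signed_perm_def by blast

lemma signed_perm_abs_range: "signed_perm n w \<Longrightarrow> a \<in> {1..n} \<Longrightarrow> nat \<bar>w a\<bar> \<in> {1..n}"
  unfolding signed_perm_def bij_betw_def by blast

lemma signed_perm_abs_inj:
  "signed_perm n w \<Longrightarrow> a \<in> {1..n} \<Longrightarrow> b \<in> {1..n} \<Longrightarrow> a \<noteq> b \<Longrightarrow> \<bar>w a\<bar> \<noteq> \<bar>w b\<bar>"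
  unfolding signed_perm_def bij_betw_def inj_on_def by (metis nat_int abs_ge_zero int_nat_eq)

lemma neg_act_in_pos_roots_iff:
  assumes sp: "signed_perm n w" and ab: "a \<in> {1..n}" "b \<in> {1..n}" "a \<noteq> b"
    and s: "s \<in> {1,-1}"
  shows "- (act n w (e a) + (\<lambda>j. s * act n w (e b) j)) \<in> pos_roots n
     \<longleftrightarrow> (if \<bar>w a\<bar> < \<bar>w b\<bar> then w a < 0 else s * w b < 0)"
proof -
  let ?A = "nat \<bar>w a\<bar>" and ?B = "nat \<bar>w b\<bar>"
  have ne: "?A \<noteq> ?B" using signed_perm_abs_inj[OF sp ab] by simp
  have wa: "w a \<noteq> 0" and wb: "w b \<noteq> 0" using signed_perm_nonzero[OF sp] ab by auto
  define f where "f = - (act n w (e a) + (\<lambda>j. s * act n w (e b) j))"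
  have f: "f j = - (if j = ?A then sgn (w a) else 0) - s * (if j = ?B then sgn (w b) else 0)" for j
    unfolding f_def by (simp add: act_e[OF ab(1)] act_e[OF ab(2)])
  have "f \<in> pos_roots n \<longleftrightarrow> f (min ?A ?B) = 1"
    by (rule pos_roots_iff_leading_coeff[OF ne signed_perm_abs_range[OF sp] signed_perm_abs_range[OF sp]])
      (use ab ne wa wb s in \<open>auto simp: f sgn_if\<close>)
  also have "\<dots> \<longleftrightarrow> (if \<bar>w a\<bar> < \<bar>w b\<bar> then w a < 0 else s * w b < 0)"
    using ne wa wb s by (auto simp: f sgn_if min_def)
  finally show ?thesis unfolding f_def .
qed

lemma minus_root_in_Inv_iff:
  assumes "signed_perm n w" "1 \<le> a" "a < b" "b \<le> n"
  shows "e a - e b \<in> Inv n w \<longleftrightarrow> (if \<bar>w a\<bar> < \<bar>w b\<bar> then w a < 0 else 0 < w b)"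
proof -
  have "act n w (e a - e b) = act n w (e a) + (\<lambda>j. - 1 * act n w (e b) j)"
    by (simp add: act_diff fun_eq_iff)
  moreover have "e a - e b \<in> pos_roots n" using assms unfolding pos_roots_def by blast
  ultimately show ?thesis
    using neg_act_in_pos_roots_iff[of n w a b "-1"] assms unfolding Inv_def by auto
qed

lemma plus_root_in_Inv_iff:
  assumes "signed_perm n w" "1 \<le> a" "a < b" "b \<le> n"
  shows "e a + e b \<in> Inv n w \<longleftrightarrow> (if \<bar>w a\<bar> < \<bar>w b\<bar> then w a < 0 else w b < 0)"
proof -
  have "act n w (e a + e b) = act n w (e a) + (\<lambda>j. 1 * act n w (e b) j)"
    by (simp add: act_add fun_eq_iff)
  moreover have "e a + e b \<in> pos_roots n" using assms unfolding pos_roots_def by blast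
  ultimately show ?thesis
    using neg_act_in_pos_roots_iff[of n w a b 1] assms unfolding Inv_def by auto
qed

lemma lam1_eq_card_add:
  assumes "1 \<le> i" "i \<le> k"
  shows "lam1 n k S i = card {b\<in>{k<..n}. e (k+1-i) - e b \<in> S} + card {b\<in>{k<..n}. e (k+1-i) + e b \<in> S}"
proof -
  let ?p = "k+1-i"
  have minus: "S \<inter> {e ?p - e b | b. k < b \<and> b \<le> n} = (\<lambda>b. e ?p - e b) ` {b\<in>{k<..n}. e ?p - e b \<in> S}"
    and plus: "S \<inter> {e ?p + e b | b. k < b \<and> b \<le> n} = (\<lambda>b. e ?p + e b) ` {b\<in>{k<..n}. e ?p + e b \<in> S}"
    by auto
  have inj: "inj_on (\<lambda>b. e ?p - e b) A" "inj_on (\<lambda>b. e ?p + e b) A" for A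
    by (auto simp: inj_on_def dest: e_inj)
  have "e ?p - e b \<noteq> e ?p + e b'" if "k < b" for b b'
  proof
    assume "e ?p - e b = e ?p + e b'"
    then have "(e ?p - e b) b = (e ?p + e b') b" by (rule fun_cong)
    then show False using that assms by (simp add: e_apply split: if_splits)
  qed
  then have "lam1 n k S i = card (S \<inter> {e ?p - e b | b. k < b \<and> b \<le> n}) + card (S \<inter> {e ?p + e b | b. k < b \<and> b \<le> n})"
    unfolding lam1_def Int_Un_distrib by (subst card_Un_disjoint) (auto simp: minus plus)
  then show ?thesis unfolding minus plus card_image[OF inj(1)] card_image[OF inj(2)] .
qed

lemma lam2_eq_card: "lam2 n k S i = card {a\<in>{1..<k+1-i}. e a + e (k+1-i) \<in> S}"
proof -
  let ?p = "k+1-i"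
  have "S \<inter> {e a + e ?p | a. 1 \<le> a \<and> a < ?p} = (\<lambda>a. e a + e ?p) ` {a\<in>{1..<?p}. e a + e ?p \<in> S}"
    by auto
  moreover have "inj_on (\<lambda>a. e a + e ?p) A" for A by (auto simp: inj_on_def dest: e_inj)
  ultimately show ?thesis unfolding lam2_def by (simp add: card_image)
qed

lemma row_inversions_card:
  assumes sp: "signed_perm n w" and p: "1 \<le> p" and B: "B \<subseteq> {p<..n}"
  shows "card {b\<in>B. e p - e b \<in> Inv n w} + card {b\<in>B. e p + e b \<in> Inv n w}
       = (if w p < 0 then card B + card {b\<in>B. \<bar>w p\<bar> < \<bar>w b\<bar>} else card {b\<in>B. \<bar>w b\<bar> < \<bar>w p\<bar>})"
proof -
  have fin: "finite B" using B finite_subset by blast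
  have pb: "1 \<le> p \<and> p < b \<and> b \<le> n" if "b \<in> B" for b using that p B by auto
  have wb: "w b \<noteq> 0 \<and> \<bar>w b\<bar> \<noteq> \<bar>w p\<bar>" if "b \<in> B" for b
    using signed_perm_nonzero[OF sp, of b] signed_perm_abs_inj[OF sp, of b p] pb[OF that] by auto
  let ?M = "{b\<in>B. e p - e b \<in> Inv n w}" and ?P = "{b\<in>B. e p + e b \<in> Inv n w}"
  have M: "?M = {b\<in>B. if \<bar>w p\<bar> < \<bar>w b\<bar> then w p < 0 else 0 < w b}"
    and P: "?P = {b\<in>B. if \<bar>w p\<bar> < \<bar>w b\<bar> then w p < 0 else w b < 0}"
    using minus_root_in_Inv_iff[OF sp] plus_root_in_Inv_iff[OF sp] pb by auto
  have "card ?M + card ?P = card (?M \<union> ?P) + card (?M \<inter> ?P)"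
    by (rule card_Un_Int) (use fin in auto)
  also have "\<dots> = (if w p < 0 then card B + card {b\<in>B. \<bar>w p\<bar> < \<bar>w b\<bar>} else card {b\<in>B. \<bar>w b\<bar> < \<bar>w p\<bar>})"
  proof (cases "w p < 0")
    case True
    have "?M \<union> ?P = B" unfolding M P using wb True by (fastforce simp: neq_iff)
    moreover have "?M \<inter> ?P = {b\<in>B. \<bar>w p\<bar> < \<bar>w b\<bar>}" unfolding M P using True by auto
    ultimately show ?thesis using True by simp
  next
    case False
    have "?M \<union> ?P = {b\<in>B. \<bar>w b\<bar> < \<bar>w p\<bar>}" unfolding M P using wb False by (fastforce simp: neq_iff)
    moreover have "?M \<inter> ?P = {}" unfolding M P using False by auto
    ultimately show ?thesis using False by simp
  qed
  finally show ?thesis .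
qed

lemma row_inversions_card_eq_card_imp_abs_less:
  assumes "signed_perm n w" "1 \<le> p" "B \<subseteq> {p<..n}"
    and "card {b\<in>B. e p - e b \<in> Inv n w} + card {b\<in>B. e p + e b \<in> Inv n w} = card B"
    and "b \<in> B"
  shows "\<bar>w b\<bar> < \<bar>w p\<bar>"
proof -
  have fin: "finite B" using assms(3) finite_subset by blast
  show ?thesis
  proof (cases "w p < 0")
    case True
    then have "card {b\<in>B. \<bar>w p\<bar> < \<bar>w b\<bar>} = 0" using row_inversions_card[OF assms(1-3)] assms(4) by simp
    then show ?thesis
      using fin assms(5) signed_perm_abs_inj[OF assms(1), of b p] assms(2,3) by force
  next
    case False
    then have "{b\<in>B. \<bar>w b\<bar> < \<bar>w p\<bar>} = B"
      using row_inversions_card[OF assms(1-3)] assms(4) fin by (intro card_subset_eq) auto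
    then show ?thesis using assms(5) by blast
  qed
qed

lemma card_shift: "card {l\<in>{1..m}. P (k + l)} = card {b\<in>{k<..k+m::nat}. P b}"
proof -
  have "{b\<in>{k<..k+m}. P b} = (+) k ` {l\<in>{1..m}. P (k + l)}"
  proof (intro equalityI subsetI)
    fix b assume "b \<in> {b\<in>{k<..k+m}. P b}"
    then show "b \<in> (+) k ` {l\<in>{1..m}. P (k + l)}" by (intro image_eqI[where x="b - k"]) auto
  qed auto
  then show ?thesis by (simp add: card_image)
qed

lemma lam1_Inv:
  assumes "signed_perm n w" "i \<in> {1..k}" "k < n"
  shows "lam1 n k (Inv n w) i =
    (if w (k+1-i) < 0 then n - k + card {b\<in>{k<..n}. \<bar>w (k+1-i)\<bar> < \<bar>w b\<bar>}
     else card {b\<in>{k<..n}. \<bar>w b\<bar> < \<bar>w (k+1-i)\<bar>})"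
proof -
  have "1 \<le> k+1-i" "{k<..n} \<subseteq> {k+1-i<..n}" using assms(2) by auto
  from row_inversions_card[OF assms(1) this] show ?thesis
    using lam1_eq_card_add[of i k n "Inv n w"] assms(2,3) by simp
qed

lemma lam1_Inv_eq_imp_abs_less:
  assumes "signed_perm n w" "i \<in> {1..k}" "k < n" "lam1 n k (Inv n w) i = n - k"
  shows "\<bar>w n\<bar> < \<bar>w (k+1-i)\<bar>"
proof -
  have "1 \<le> k+1-i" "{k<..n} \<subseteq> {k+1-i<..n}" using assms(2) by auto
  from row_inversions_card_eq_card_imp_abs_less[OF assms(1) this] show ?thesis
    using lam1_eq_card_add[of i k n "Inv n w"] assms(2-4) by simp
qed

lemma WOG_shape_neg_iff:
  assumes "WOG_shape n k r w" "i \<in> {1..k}"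
  shows "w (k+1-i) < 0 \<longleftrightarrow> i \<le> r"
proof (cases "i \<le> r")
  case True
  then have "k + 1 - i \<in> {k-r+1..k}" using assms(2) by auto
  then show ?thesis using True assms(1) unfolding WOG_shape_def by blast
next
  case False
  then have "k + 1 - i \<in> {1..k-r}" using assms(2) by auto
  then have "w (k+1-i) > 0" using assms(1) unfolding WOG_shape_def by blast
  then show ?thesis using False by simp
qed

lemma WOG_shape_zent_less_iff:
  assumes "WOG_shape n k r w" "i \<in> {1..r}" "q \<in> {1..r}"
  shows "zent k w i < zent k w q \<longleftrightarrow> i < q"
proof -
  have rk: "r \<le> k" using assms(1) unfolding WOG_shape_def by blast
  have pos: "k+1-i \<in> {k-r+1..k}" "k+1-q \<in> {k-r+1..k}" and neg: "w (k+1-i) < 0" "w (k+1-q) < 0"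
    using assms WOG_shape_neg_iff[OF assms(1), of i] WOG_shape_neg_iff[OF assms(1), of q]
    unfolding WOG_shape_def by auto
  have decr: "\<And>a b. a \<in> {k-r+1..k} \<Longrightarrow> b \<in> {k-r+1..k} \<Longrightarrow> a < b \<Longrightarrow> - w a > - w b"
    using assms(1) unfolding WOG_shape_def by blast
  have "i < q \<longleftrightarrow> k+1-q < k+1-i" "q < i \<longleftrightarrow> k+1-i < k+1-q" using assms(2,3) rk by auto
  then show ?thesis
    using decr[OF pos] decr[OF pos(2,1)] neg unfolding zent_def
    by (cases i q rule: linorder_cases) auto
qed

lemma lam2_Inv_barred_row:
  assumes sh: "WOG_shape n k r w" and i: "i \<in> {1..r}"
  shows "lam2 n k (Inv n w) i = card {t\<in>{1..k-r}. \<bar>w (k+1-i)\<bar> < w t} + (r - i)"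
proof -
  define p where "p = k + 1 - i"
  have sp: "signed_perm n w" and rk: "r \<le> k" and kn: "k < n"
    and pos: "\<And>a. a \<in> {1..k-r} \<Longrightarrow> w a > 0" and neg: "\<And>a. a \<in> {k-r+1..k} \<Longrightarrow> w a < 0"
    using sh unfolding WOG_shape_def by blast+
  have p: "p \<in> {k-r+1..k}" using i rk unfolding p_def by auto
  have split: "{a\<in>{1..<p}. e a + e p \<in> Inv n w} = {t\<in>{1..k-r}. \<bar>w p\<bar> < w t} \<union> {k-r+1..<p}"
  proof -
    have "e a + e p \<in> Inv n w \<longleftrightarrow> \<bar>w p\<bar> < w a" if "a \<in> {1..k-r}" for a
      using plus_root_in_Inv_iff[OF sp, of a p] signed_perm_abs_inj[OF sp, of a p]
        pos[OF that] neg[OF p] that p kn by auto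
    moreover have "e a + e p \<in> Inv n w" if "a \<in> {k-r+1..<p}" for a
      using plus_root_in_Inv_iff[OF sp, of a p] neg[of a] neg[OF p] that p kn by auto
    ultimately show ?thesis using p by fastforce
  qed
  have "card {k-r+1..<p} = r - i" using i rk unfolding p_def by simp
  then show ?thesis
    unfolding lam2_eq_card p_def[symmetric] split by (subst card_Un_disjoint) auto
qed

lemma lam2_Inv_unbarred_row:
  assumes sh: "WOG_shape n k r w" and i: "i \<in> {1..k}" "r < i"
  shows "lam2 n k (Inv n w) i = 0"
proof -
  define p where "p = k + 1 - i"
  have sp: "signed_perm n w" and kn: "k < n" and pos: "\<And>a. a \<in> {1..k-r} \<Longrightarrow> w a > 0"
    using sh unfolding WOG_shape_def by blast+
  have p: "p \<in> {1..k-r}" using i unfolding p_def by auto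
  have "e a + e p \<notin> Inv n w" if "a \<in> {1..<p}" for a
    using plus_root_in_Inv_iff[OF sp, of a p] pos[of a] pos[OF p] that p kn by auto
  then show ?thesis unfolding lam2_eq_card p_def[symmetric] by simp
qed

lemma lam1_Inv_WOG:
  assumes sh: "WOG_shape n k r w" and i: "i \<in> {1..k}"
  shows "lam1 n k (Inv n w) i =
    (if i \<le> r then n - k + card {l\<in>{1..n-k}. zent k w i < vent k w l}
     else card {l\<in>{1..n-k}. yent w (k + 1 - i) > vent k w l})"
proof -
  have sp: "signed_perm n w" and kn: "k < n" using sh unfolding WOG_shape_def by blast+
  have shift: "card {l\<in>{1..n-k}. P (k + l)} = card {b\<in>{k<..n}. P b}" for P
    using card_shift[of "n-k" P k] kn by simp
  show ?thesis
  proof (cases "i \<le> r")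
    case True
    then have "{l\<in>{1..n-k}. zent k w i < vent k w l} = {l\<in>{1..n-k}. \<bar>w (k+1-i)\<bar> < \<bar>w (k+l)\<bar>}"
      using WOG_shape_neg_iff[OF sh i] unfolding zent_def vent_def by auto
    then show ?thesis using lam1_Inv[OF sp i kn] WOG_shape_neg_iff[OF sh i] True
      shift[of "\<lambda>b. \<bar>w (k+1-i)\<bar> < \<bar>w b\<bar>"] by simp
  next
    case False
    then have "{l\<in>{1..n-k}. yent w (k+1-i) > vent k w l} = {l\<in>{1..n-k}. \<bar>w (k+l)\<bar> < \<bar>w (k+1-i)\<bar>}"
      using WOG_shape_neg_iff[OF sh i] unfolding yent_def vent_def by auto
    then show ?thesis using lam1_Inv[OF sp i kn] WOG_shape_neg_iff[OF sh i] False
      shift[of "\<lambda>b. \<bar>w b\<bar> < \<bar>w (k+1-i)\<bar>"] by simp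
  qed
qed

lemma lam2_Inv_WOG:
  assumes sh: "WOG_shape n k r w" and i: "i \<in> {1..k}"
  shows "lam2 n k (Inv n w) i =
    (if i \<le> r then card {q\<in>{1..r}. zent k w i < zent k w q} + card {t\<in>{1..k-r}. zent k w i < yent w t}
     else 0)"
proof (cases "i \<le> r")
  case True
  then have "i \<in> {1..r}" using i by simp
  moreover have "{t\<in>{1..k-r}. zent k w i < yent w t} = {t\<in>{1..k-r}. \<bar>w (k+1-i)\<bar> < w t}"
    using WOG_shape_neg_iff[OF sh i] True sh unfolding zent_def yent_def WOG_shape_def by auto
  moreover from \<open>i \<in> {1..r}\<close> have "{q\<in>{1..r}. zent k w i < zent k w q} = {i<..r}"
    using WOG_shape_zent_less_iff[OF sh] by auto
  ultimately show ?thesis using lam2_Inv_barred_row[OF sh] True by simp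
qed (use lam2_Inv_unbarred_row[OF sh i] in simp)

lemma arrows_Inv_iff:
  assumes sp: "signed_perm n w" and i: "i \<in> {1..k}" and kn: "k < n"
    and "lam1 n k (Inv n w) i = n - k"
  shows "arrow_up n k (Inv n w) i \<longleftrightarrow> 0 < w n" and "arrow_down n k (Inv n w) i \<longleftrightarrow> w n < 0"
proof -
  have "\<bar>w n\<bar> < \<bar>w (k+1-i)\<bar>" by (rule lam1_Inv_eq_imp_abs_less[OF assms])
  moreover have "1 \<le> k+1-i" "k+1-i < n" using i kn by auto
  ultimately show "arrow_up n k (Inv n w) i \<longleftrightarrow> 0 < w n" "arrow_down n k (Inv n w) i \<longleftrightarrow> w n < 0"
    unfolding arrow_up_def arrow_down_def
    using minus_root_in_Inv_iff[OF sp, of "k+1-i" n] plus_root_in_Inv_iff[OF sp, of "k+1-i" n] by auto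
qed

theorem lemma3p14:
  fixes n k r :: nat and w :: "nat \<Rightarrow> int"
  assumes "1 \<le> k" and "k < n" and "WOG_shape n k r w"
  shows "\<forall>i\<in>{1..k}.
           lam1 n k (Inv n w) i =
             (if i \<le> r then n - k + card {l\<in>{1..n-k}. zent k w i < vent k w l}
              else card {l\<in>{1..n-k}. yent w (k + 1 - i) > vent k w l})
         \<and> lam2 n k (Inv n w) i =
             (if i \<le> r then card {q\<in>{1..r}. zent k w i < zent k w q}
                             + card {t\<in>{1..k-r}. zent k w i < yent w t}
              else 0)
         \<and> (lam1 n k (Inv n w) i = n - k \<longrightarrow>
              (typeI n w \<longrightarrow> arrow_up n k (Inv n w) i \<and> \<not> arrow_down n k (Inv n w) i) \<and>
              (typeII n w \<longrightarrow> arrow_down n k (Inv n w) i \<and> \<not> arrow_up n k (Inv n w) i))"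
proof -
  have sp: "signed_perm n w" using assms(3) unfolding WOG_shape_def by blast
  show ?thesis
    using lam1_Inv_WOG[OF assms(3)] lam2_Inv_WOG[OF assms(3)] arrows_Inv_iff[OF sp _ assms(2)]
    unfolding typeI_def typeII_def by auto
qed

end
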